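(* Let $N$ be a finite nonempty set, $p\notin N$, $N'=N\cup\{p\}$, and let $\mathscr{B}$ be any minimal balanced collection on $N'$. Then $\mathscr{B}$ is obtained from minimal balanced collections on $N$ by one of the following four constructions: (1) there are a minimal balanced collection $\mathscr{C}=\{S_1,\dots,S_k\}$ on $N$ with balancing weights $\lambda$ and $I\subseteq[k]$ with $\lambda_I=1$ such that $\mathscr{B}=\{S_i\cup\{p\}\mid i\in I\}\cup\{S_i\mid i\notin I\}$; (2) there are such $\mathscr{C},\lambda$ and $I\subseteq[k]$ with $\lambda_I<1$ such that $\mathscr{B}=\{S_i\cup\{p\}\mid i\in I\}\cup\{S_i\mid i\notin I\}\cup\{\{p\}\}$; (3) there are such $\mathscr{C},\lambda$, $I\subseteq[k]$ and $\delta\in[k]\setminus I$ with $1>\lambda_I>1-\lambda_{S_\delta}$ such that $\mathscr{B}=\{S_i\cup\{p\}\mid i\in I\}\cup\{S_i\mid i\notin I\}\cup\{S_\delta\cup\{p\}\}$; (4) there are two distinct minimal balanced collections $\mathscr{C}^1,\mathscr{C}^2$ on $N$ whose union $\mathscr{C}=\{S_1,\dots,S_k\}$ has incidence matrix $A^{\mathscr{C}}$ of rank $k-1$, and $I\subseteq[k]$ with $\mu_I\neq\nu_I$ and $t^I=(1-\mu_I)/(\nu_I-\mu_I)\in\,]0,1[$, such that $\mathscr{B}=\{S_i\cup\{p\}\mid i\in I\}\cup\{S_i\mid i\notin I\}$ (here $\mu,\nu$ are the balancing weights of $\mathscr{C}^1,\mathscr{C}^2$ extended by $0$ to $\mathscr{C}$).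 Consequently, applying all four constructions to all minimal balanced collections on $N$ (and all pairs of them) yields exactly the set of minimal balanced collections on $N'$.
   Context: For $T\subseteq N$, $\mathbf{1}^T\in\mathbb{R}^N$ denotes the characteristic vector of $T$. A collection $\mathscr{B}$ of nonempty subsets of a finite set $N$ is balanced if there exist positive weights $(\lambda_S)_{S\in\mathscr{B}}$ (balancing weights) with $\sum_{S\in\mathscr{B}}\lambda_S\mathbf{1}^S=\mathbf{1}^N$. A balanced collection is minimal if it contains no balanced proper subcollection; equivalently, its system of balancing weights is unique. For a collection $\mathscr{C}=\{S_1,\dots,S_k\}$, $A^{\mathscr{C}}$ is the $|N|\times k$ matrix with columns $\mathbf{1}^{S_1},\dots,\mathbf{1}^{S_k}$; for weights $w$ and $I\subseteq[k]=\{1,\dots,k\}$, $w_I=\sum_{i\in I}w_{S_i}$. *)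

theory Defs
  imports Main "HOL-Library.Indicator_Function"
begin

definition balancing_weights :: "'a set \<Rightarrow> 'a set set \<Rightarrow> ('a set \<Rightarrow> real) \<Rightarrow> bool" where
  "balancing_weights N C lam \<longleftrightarrow>
     (\<forall>S\<in>C. lam S > 0) \<and> (\<forall>i\<in>N. (\<Sum>S\<in>C. lam S * indicator S i) = 1)"

definition balanced :: "'a set \<Rightarrow> 'a set set \<Rightarrow> bool" where
  "balanced N C \<longleftrightarrow> (\<forall>S\<in>C. S \<noteq> {} \<and> S \<subseteq> N) \<and> (\<exists>lam. balancing_weights N C lam)"

definition minimal_balanced :: "'a set \<Rightarrow> 'a set set \<Rightarrow> bool" where
  "minimal_balanced N C \<longleftrightarrow> balanced N C \<and> (\<forall>C'. C' \<subset> C \<longrightarrow> \<not> balanced N C')"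

definition indep_columns :: "'a set \<Rightarrow> 'a set set \<Rightarrow> bool" where
  "indep_columns N D \<longleftrightarrow>
     (\<forall>c :: 'a set \<Rightarrow> real. (\<forall>i\<in>N. (\<Sum>S\<in>D. c S * indicator S i) = 0) \<longrightarrow> (\<forall>S\<in>D. c S = 0))"

definition incidence_rank :: "'a set \<Rightarrow> 'a set set \<Rightarrow> nat" where
  "incidence_rank N C = Max {card D | D. D \<subseteq> C \<and> indep_columns N D}"

definition extend_by :: "'a \<Rightarrow> 'a set set \<Rightarrow> 'a set set \<Rightarrow> 'a set set" where
  "extend_by p C J = (\<lambda>S. insert p S) ` J \<union> (C - J)"

end

theory Submission
  imports Defs
begin

text \<open>
  A balanced collection is minimal exactly when the characteristic vectors of its sets are
  linearly independent. In an independent collection \<open>B\<close> on \<open>N \<union> {p}\<close> at most one set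
  \<open>T\<close> contains \<open>p\<close> while \<open>T - {p}\<close> is empty or again in \<open>B\<close>, because each such set differs
  from \<open>T - {p}\<close> by the unit vector of \<open>p\<close>. Removing \<open>p\<close> from all other sets yields a
  collection \<open>C\<close> on \<open>N\<close> and the subcollection \<open>J\<close> of sets that contained \<open>p\<close>, so that
  \<open>B\<close> is \<open>extend_by p C J\<close>, possibly together with that one set \<open>Y \<union> {p}\<close>, where \<open>Y\<close>
  is empty or belongs to \<open>C - J\<close>.

  With the extra set, the columns of \<open>B\<close> are independent exactly when those of \<open>C\<close> are, and
  the balancing weights of \<open>B\<close> correspond to those of \<open>C\<close> with \<open>J\<close>-weight below 1:
  constructions (2) and (3). Without it, the columns of \<open>B\<close> are those of \<open>C\<close> augmented by the
  row \<open>\<one>\<^sup>J\<close>. If the columns of \<open>C\<close> are independent this is construction (1). Otherwise the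
  kernel of \<open>A\<^sup>C\<close> is a line not orthogonal to \<open>\<one>\<^sup>J\<close>, the balancing weights of \<open>C\<close> with
  \<open>J\<close>-weight 1 form an open segment, and its two endpoints are minimal balanced
  collections \<open>C\<^sub>1 \<noteq> C\<^sub>2\<close> with \<open>C\<^sub>1 \<union> C\<^sub>2 = C\<close>: construction (4).
\<close>

section \<open>Minimal balanced collections have independent columns\<close>

definition collection_on :: "'a set \<Rightarrow> 'a set set \<Rightarrow> bool" where
  "collection_on N C \<longleftrightarrow> (\<forall>S\<in>C. S \<noteq> {} \<and> S \<subseteq> N)"

definition kernel_vector :: "'a set \<Rightarrow> 'a set set \<Rightarrow> ('a set \<Rightarrow> real) \<Rightarrow> bool" where
  "kernel_vector N C c \<longleftrightarrow> (\<forall>i\<in>N. (\<Sum>S\<in>C. c S * indicator S i) = 0)"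

lemma balanced_iff_collection_on:
  "balanced N C \<longleftrightarrow> collection_on N C \<and> (\<exists>lam. balancing_weights N C lam)"
  unfolding balanced_def collection_on_def ..

lemma minimal_balanced_collection_on: "minimal_balanced N C \<Longrightarrow> collection_on N C"
  unfolding minimal_balanced_def balanced_iff_collection_on by blast

lemma finite_collection_on: "finite N \<Longrightarrow> collection_on N C \<Longrightarrow> finite C"
  by (rule finite_subset[of C "Pow N"]) (auto simp: collection_on_def)

lemma indep_columns_iff_kernel_vector:
  "indep_columns N D \<longleftrightarrow> (\<forall>c. kernel_vector N D c \<longrightarrow> (\<forall>S\<in>D. c S = 0))"
  unfolding indep_columns_def kernel_vector_def ..

lemma kernel_vector_cong:
  "(\<And>S. S \<in> C \<Longrightarrow> a S = b S) \<Longrightarrow> kernel_vector N C a \<longleftrightarrow> kernel_vector N C b"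
  unfolding kernel_vector_def by simp

lemma kernel_vector_diff:
  "kernel_vector N C a \<Longrightarrow> kernel_vector N C b \<Longrightarrow> kernel_vector N C (\<lambda>S. a S - s * b S)"
  unfolding kernel_vector_def
  by (simp add: left_diff_distrib sum_subtractf mult.assoc flip: sum_distrib_left)

lemma kernel_vector_uminus: "kernel_vector N C c \<Longrightarrow> kernel_vector N C (\<lambda>S. - c S)"
  unfolding kernel_vector_def by (simp add: sum_negf)

lemma sum_if_member:
  fixes f g :: "'a \<Rightarrow> 'b::semiring_0"
  shows "finite C \<Longrightarrow> D \<subseteq> C \<Longrightarrow> (\<Sum>S\<in>C. (if S \<in> D then f S else 0) * g S) = (\<Sum>S\<in>D. f S * g S)"
  by (rule sum.mono_neutral_cong_right) simp_all

lemma kernel_vector_if_member: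
  "finite C \<Longrightarrow> D \<subseteq> C \<Longrightarrow> kernel_vector N C (\<lambda>S. if S \<in> D then e S else 0) \<longleftrightarrow> kernel_vector N D e"
  unfolding kernel_vector_def by (simp add: sum_if_member)

lemma kernel_vector_has_negative:
  assumes "finite C" "collection_on N C" "kernel_vector N C c" "S0 \<in> C" "c S0 \<noteq> 0"
  obtains S where "S \<in> C" "c S < 0"
proof (rule ccontr)
  assume "\<not> thesis"
  with that have nonneg: "\<forall>S\<in>C. c S \<ge> 0" by force
  with assms(5) have pos: "c S0 > 0" using assms(4) by force
  from assms(2,4) obtain i where i: "i \<in> S0" "i \<in> N" unfolding collection_on_def by blast
  have "c S0 * indicator S0 i \<le> (\<Sum>S\<in>C. c S * indicator S i)"
    using assms(1,4) nonneg by (intro member_le_sum) auto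
  also have "\<dots> = 0" using assms(3) i unfolding kernel_vector_def by auto
  finally show False using pos i by simp
qed

lemma kernel_vector_has_positive:
  assumes "finite C" "collection_on N C" "kernel_vector N C c" "S0 \<in> C" "c S0 \<noteq> 0"
  obtains S where "S \<in> C" "c S > 0"
proof -
  obtain S where "S \<in> C" "- c S < 0"
    using kernel_vector_has_negative[OF assms(1,2) kernel_vector_uminus[OF assms(3)] assms(4)] assms(5)
    by auto
  then show thesis using that by simp
qed

lemma ratio_test:
  fixes w d :: "'b \<Rightarrow> real"
  assumes "finite C" "\<forall>S\<in>C. w S > 0" "S0 \<in> C" "d S0 < 0"
  obtains a S1 where "a > 0" "S1 \<in> C" "d S1 < 0" "w S1 + a * d S1 = 0"
    "\<forall>S\<in>C. w S + a * d S \<ge> 0"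
proof -
  define M where "M = {S\<in>C. d S < 0}"
  have M: "finite M" "S0 \<in> M" using assms unfolding M_def by auto
  define a where "a = Min ((\<lambda>S. w S / - d S) ` M)"
  obtain S1 where S1: "S1 \<in> M" "a = w S1 / - d S1"
    using Min_in[of "(\<lambda>S. w S / - d S) ` M"] M unfolding a_def by blast
  have a_pos: "a > 0" using S1 assms(2) unfolding M_def by (auto intro: divide_pos_neg)
  have "w S + a * d S \<ge> 0" if "S \<in> C" for S
  proof (cases "d S < 0")
    case True
    then have "a \<le> w S / - d S" unfolding a_def using M that M_def by (intro Min_le) auto
    then have "a * - d S \<le> w S" using True by (subst (asm) pos_le_divide_eq) auto
    then show ?thesis by (simp add: algebra_simps)
  next
    case False
    then show ?thesis using a_pos assms(2) that by (simp add: add_nonneg_nonneg less_imp_le)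
  qed
  moreover have "S1 \<in> C" "d S1 < 0" "w S1 + a * d S1 = 0" using S1 unfolding M_def by auto
  ultimately show thesis using that a_pos by blast
qed

lemma balancing_weights_shift:
  assumes "finite C" "balancing_weights N C w" "kernel_vector N C d"
    and nonneg: "\<forall>S\<in>C. w S + a * d S \<ge> 0"
  shows "balancing_weights N {S\<in>C. w S + a * d S > 0} (\<lambda>S. w S + a * d S)"
  unfolding balancing_weights_def
proof (intro conjI ballI)
  fix i assume i: "i \<in> N"
  have "(\<Sum>S\<in>{S\<in>C. w S + a * d S > 0}. (w S + a * d S) * indicator S i)
      = (\<Sum>S\<in>C. (w S + a * d S) * indicator S i)"
    using assms(1) nonneg by (intro sum.mono_neutral_left) force+
  also have "\<dots> = (\<Sum>S\<in>C. w S * indicator S i) + a * (\<Sum>S\<in>C. d S * indicator S i)"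
    by (simp add: algebra_simps sum.distrib sum_distrib_left)
  also have "\<dots> = 1" using assms(2,3) i unfolding balancing_weights_def kernel_vector_def by auto
  finally show "(\<Sum>S\<in>{S\<in>C. w S + a * d S > 0}. (w S + a * d S) * indicator S i) = 1" .
qed auto

lemma not_indep_columns_if_balanced_subset:
  assumes "finite C" "balancing_weights N C lam" "C' \<subset> C" "balancing_weights N C' lam'"
  shows "\<not> indep_columns N C"
proof -
  let ?c = "\<lambda>S. lam S - (if S \<in> C' then lam' S else 0)"
  have "kernel_vector N C ?c"
    unfolding kernel_vector_def
  proof
    fix i assume "i \<in> N"
    then show "(\<Sum>S\<in>C. ?c S * indicator S i) = 0"
      using assms sum_if_member[OF assms(1), of C' lam' "\<lambda>S. indicator S i"]
      unfolding balancing_weights_def by (simp add: left_diff_distrib sum_subtractf)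
  qed
  moreover obtain S where S: "S \<in> C" "S \<notin> C'" using assms(3) by blast
  moreover have "lam S > 0" using assms(2) S(1) unfolding balancing_weights_def by blast
  ultimately show ?thesis using S(2) unfolding indep_columns_iff_kernel_vector by force
qed

lemma balanced_subset_if_not_indep_columns:
  assumes "finite C" "collection_on N C" "balancing_weights N C lam" "\<not> indep_columns N C"
  obtains C' where "C' \<subset> C" "balanced N C'"
proof -
  have lam_pos: "\<forall>S\<in>C. lam S > 0" using assms(3) unfolding balancing_weights_def by blast
  obtain c S0 where c: "kernel_vector N C c" "S0 \<in> C" "c S0 \<noteq> 0"
    using assms(4) unfolding indep_columns_iff_kernel_vector by blast
  obtain S where S: "S \<in> C" "c S < 0" using kernel_vector_has_negative[OF assms(1,2) c] .
  obtain a S1 where "a > 0" and S1: "S1 \<in> C" "c S1 < 0" "lam S1 + a * c S1 = 0"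
    and nonneg: "\<forall>S\<in>C. lam S + a * c S \<ge> 0"
    by (rule ratio_test[where d = c, OF assms(1) lam_pos S])
  have "S1 \<notin> {S\<in>C. lam S + a * c S > 0}" using S1 by simp
  then have "{S\<in>C. lam S + a * c S > 0} \<subset> C" using S1 by blast
  moreover have "balanced N {S\<in>C. lam S + a * c S > 0}"
    using balancing_weights_shift[OF assms(1,3) c(1) nonneg] assms(2)
    unfolding balanced_iff_collection_on collection_on_def by auto
  ultimately show thesis using that by blast
qed

lemma minimal_balanced_iff_indep_columns:
  assumes "finite N"
  shows "minimal_balanced N C \<longleftrightarrow> balanced N C \<and> indep_columns N C"
proof (cases "balanced N C")
  case True
  then obtain lam where lam: "balancing_weights N C lam" and coll: "collection_on N C"
    unfolding balanced_iff_collection_on by blast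
  have fin: "finite C" using finite_collection_on[OF assms coll] .
  have "(\<exists>C'. C' \<subset> C \<and> balanced N C') \<longleftrightarrow> \<not> indep_columns N C"
    using not_indep_columns_if_balanced_subset[OF fin lam]
      balanced_subset_if_not_indep_columns[OF fin coll lam]
    unfolding balanced_def by metis
  then show ?thesis using True unfolding minimal_balanced_def by blast
qed (simp add: minimal_balanced_def)

section \<open>Incidence matrices of corank one\<close>

lemma kernel_vector_zero_outside:
  assumes "finite C" "D \<subseteq> C" "\<forall>S\<in>C - D. e S = 0"
  shows "kernel_vector N C e \<longleftrightarrow> kernel_vector N D e"
proof -
  have "(\<Sum>S\<in>D. e S * indicator S i) = (\<Sum>S\<in>C. e S * indicator S i)" for i :: 'a
    using assms by (intro sum.mono_neutral_left) auto
  then show ?thesis unfolding kernel_vector_def by simp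
qed

lemma indep_columns_if_kernel_spanned:
  assumes "finite C" and spanned: "\<forall>e. kernel_vector N C e \<longrightarrow> (\<exists>s. \<forall>S\<in>C. e S = s * d S)"
    and "D \<subseteq> C" "S0 \<in> C - D" "d S0 \<noteq> 0"
  shows "indep_columns N D"
  unfolding indep_columns_iff_kernel_vector
proof (intro allI impI)
  fix e assume "kernel_vector N D e"
  then have "kernel_vector N C (\<lambda>S. if S \<in> D then e S else 0)"
    using kernel_vector_if_member assms(1,3) by blast
  then obtain s where s: "\<forall>S\<in>C. (if S \<in> D then e S else 0) = s * d S"
    using spanned by blast
  then have "s = 0" using assms(4,5) by force
  then show "\<forall>S\<in>D. e S = 0" using s assms(3) by force
qed

lemma finite_incidence_ranks: "finite C \<Longrightarrow> finite {card D |D. D \<subseteq> C \<and> indep_columns N D}"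
  by (rule finite_subset[of _ "{..card C}"]) (auto intro: card_mono)

lemma incidence_rank_eq_card_minus_one:
  assumes "finite C" "S0 \<in> C" "indep_columns N (C - {S0})" "\<not> indep_columns N C"
  shows "incidence_rank N C = card C - 1"
  unfolding incidence_rank_def
proof (rule Max_eqI)
  show "card C - 1 \<in> {card D |D. D \<subseteq> C \<and> indep_columns N D}"
    using assms(1-3) by (intro CollectI exI[of _ "C - {S0}"]) auto
  fix r assume "r \<in> {card D |D. D \<subseteq> C \<and> indep_columns N D}"
  then obtain D where D: "r = card D" "D \<subseteq> C" "indep_columns N D" by blast
  with assms(4) have "D \<subset> C" by blast
  then have "card D < card C" using psubset_card_mono assms(1) by blast
  then show "r \<le> card C - 1" using D(1) by simp
qed (rule finite_incidence_ranks[OF assms(1)])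

lemma incidence_rank_eq_card_minus_oneE:
  assumes "finite C" "C \<noteq> {}" "incidence_rank N C = card C - 1"
  obtains S0 where "S0 \<in> C" "indep_columns N (C - {S0})"
proof -
  have "indep_columns N {}" unfolding indep_columns_def by simp
  then have "0 \<in> {card D |D. D \<subseteq> C \<and> indep_columns N D}"
    by (intro CollectI exI[of _ "{}"]) simp
  then have "incidence_rank N C \<in> {card D |D. D \<subseteq> C \<and> indep_columns N D}"
    unfolding incidence_rank_def using finite_incidence_ranks[OF assms(1)] by (intro Max_in) blast+
  then obtain D where D: "D \<subseteq> C" "indep_columns N D" "incidence_rank N C = card D"
    by blast
  have "card C > 0" using assms(1,2) by (simp add: card_gt_0_iff)
  then have "D \<noteq> C" using D(3) assms(3) by auto
  then obtain S0 where S0: "S0 \<in> C" "S0 \<notin> D" using D(1) by blast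
  have "D \<subseteq> C - {S0}" using D(1) S0(2) by blast
  moreover have "card D = card (C - {S0})" using assms(1,3) S0(1) D(3) by simp
  ultimately have "D = C - {S0}" using assms(1) by (intro card_subset_eq) auto
  then show thesis using that S0(1) D(2) by blast
qed

lemma kernel_vector_vanishing_at:
  assumes "finite C" "S0 \<in> C" "indep_columns N (C - {S0})" "kernel_vector N C d" "d S0 = 0"
  shows "\<forall>S\<in>C. d S = 0"
proof -
  have "kernel_vector N (C - {S0}) d"
    using kernel_vector_zero_outside[OF assms(1), of "C - {S0}" d N] assms(2,4,5)
    by (simp add: Diff_Diff_Int Int_absorb1)
  then have "\<forall>S\<in>C - {S0}. d S = 0" using assms(3) unfolding indep_columns_iff_kernel_vector by blast
  then show ?thesis using assms(5) by blast
qed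

lemma kernel_vector_proportional:
  assumes "finite C" "S0 \<in> C" "indep_columns N (C - {S0})"
    and "kernel_vector N C c" "kernel_vector N C d" "d S0 \<noteq> 0"
  shows "\<forall>S\<in>C. c S = c S0 / d S0 * d S"
proof -
  have "c S0 - c S0 / d S0 * d S0 = 0" using assms(6) by simp
  from kernel_vector_vanishing_at[OF assms(1-3) kernel_vector_diff[OF assms(4,5)] this]
  show ?thesis by simp
qed

section \<open>Crossing pairs\<close>

text \<open>Independence of the columns of \<open>A\<^sup>C\<close> extended by the row \<open>\<one>\<^sup>J\<close>, which is the row of the new
  player \<open>p\<close> in \<open>extend_by p C J\<close>.\<close>
definition indep_columns_augmented :: "'a set \<Rightarrow> 'a set set \<Rightarrow> 'a set set \<Rightarrow> bool" where
  "indep_columns_augmented N C J \<longleftrightarrow>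
     (\<forall>e. kernel_vector N C e \<and> (\<Sum>S\<in>J. e S) = 0 \<longrightarrow> (\<forall>S\<in>C. e S = 0))"

lemma indep_columns_augmentedI: "indep_columns N C \<Longrightarrow> indep_columns_augmented N C J"
  unfolding indep_columns_augmented_def indep_columns_iff_kernel_vector by blast

text \<open>The weights \<open>(1 - t) * mu + t * nu\<close> balance \<open>C1 \<union> C2\<close> and give \<open>J\<close> total weight 1.\<close>
definition crossing_pair ::
  "'a set \<Rightarrow> 'a set set \<Rightarrow> 'a set set \<Rightarrow> ('a set \<Rightarrow> real) \<Rightarrow> ('a set \<Rightarrow> real) \<Rightarrow> 'a set set \<Rightarrow> bool"
  where
  "crossing_pair N C1 C2 lam1 lam2 J \<longleftrightarrow>
     minimal_balanced N C1 \<and> minimal_balanced N C2 \<and> C1 \<noteq> C2 \<and>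
     balancing_weights N C1 lam1 \<and> balancing_weights N C2 lam2 \<and>
     incidence_rank N (C1 \<union> C2) = card (C1 \<union> C2) - 1 \<and>
     J \<subseteq> C1 \<union> C2 \<and>
     (let mu = (\<lambda>S. if S \<in> C1 then lam1 S else 0);
          nu = (\<lambda>S. if S \<in> C2 then lam2 S else 0);
          muJ = (\<Sum>S\<in>J. mu S); nuJ = (\<Sum>S\<in>J. nu S);
          t = (1 - muJ) / (nuJ - muJ)
      in muJ \<noteq> nuJ \<and> 0 < t \<and> t < 1)"

lemma kernel_spanned_if_indep_columns_augmented:
  assumes "indep_columns_augmented N C J" "kernel_vector N C d" "(\<Sum>S\<in>J. d S) \<noteq> 0"
    and "kernel_vector N C e"
  shows "\<forall>S\<in>C. e S = (\<Sum>S\<in>J. e S) / (\<Sum>S\<in>J. d S) * d S"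
proof -
  let ?s = "(\<Sum>S\<in>J. e S) / (\<Sum>S\<in>J. d S)"
  have "(\<Sum>S\<in>J. ?s * d S) = (\<Sum>S\<in>J. e S)"
    using assms(3) by (simp only: sum_distrib_left[symmetric]) simp
  then have "(\<Sum>S\<in>J. e S - ?s * d S) = 0" by (simp add: sum_subtractf)
  moreover have "kernel_vector N C (\<lambda>S. e S - ?s * d S)" by (rule kernel_vector_diff[OF assms(4,2)])
  ultimately have "\<forall>S\<in>C. e S - ?s * d S = 0"
    using assms(1) unfolding indep_columns_augmented_def by blast
  then show ?thesis by simp
qed

lemma minimal_balanced_at_boundary:
  assumes "finite N" "collection_on N C" "balancing_weights N C w" "kernel_vector N C d"
    and spanned: "\<forall>e. kernel_vector N C e \<longrightarrow> (\<exists>s. \<forall>S\<in>C. e S = s * d S)"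
    and nonneg: "\<forall>S\<in>C. w S + a * d S \<ge> 0"
    and "Sz \<in> C" "w Sz + a * d Sz = 0" "d Sz \<noteq> 0"
  shows "minimal_balanced N {S\<in>C. w S + a * d S > 0}"
proof -
  have fin: "finite C" using finite_collection_on[OF assms(1,2)] .
  have "balanced N {S\<in>C. w S + a * d S > 0}"
    using balancing_weights_shift[OF fin assms(3,4) nonneg] assms(2)
    unfolding balanced_iff_collection_on collection_on_def by blast
  moreover have "indep_columns N {S\<in>C. w S + a * d S > 0}"
    using assms(7-9) by (intro indep_columns_if_kernel_spanned[OF fin spanned]) auto
  ultimately show ?thesis using minimal_balanced_iff_indep_columns[OF assms(1)] by blast
qed

lemma crossing_pairI:
  assumes "minimal_balanced N C1" "minimal_balanced N C2" "C1 \<noteq> C2"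
    and "balancing_weights N C1 lam1" "balancing_weights N C2 lam2"
    and "incidence_rank N (C1 \<union> C2) = card (C1 \<union> C2) - 1" "J \<subseteq> C1 \<union> C2"
    and "(\<Sum>S\<in>J. if S \<in> C1 then lam1 S else 0) = 1 + a * dJ"
    and "(\<Sum>S\<in>J. if S \<in> C2 then lam2 S else 0) = 1 - b * dJ"
    and "a > 0" "b > 0" "dJ \<noteq> 0"
  shows "crossing_pair N C1 C2 lam1 lam2 J"
proof -
  have "(1 + a * dJ) - (1 - b * dJ) = (a + b) * dJ" by (simp add: algebra_simps)
  then have "1 + a * dJ \<noteq> 1 - b * dJ" using assms(10-12) by auto
  moreover have "1 - (1 + a * dJ) = - (a * dJ)" "(1 - b * dJ) - (1 + a * dJ) = - ((a + b) * dJ)"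
    by (simp_all add: algebra_simps)
  then have t: "(1 - (1 + a * dJ)) / ((1 - b * dJ) - (1 + a * dJ)) = a / (a + b)"
    using assms(12) by (simp only: minus_divide_divide) simp
  moreover have "0 < a / (a + b)" "a / (a + b) < 1" using assms(10,11) by auto
  ultimately show ?thesis
    using assms(1-7) by (simp only: crossing_pair_def Let_def assms(8,9) t) blast
qed

lemma crossing_pairD:
  assumes "crossing_pair N C1 C2 lam1 lam2 J"
  shows "minimal_balanced N C1" "minimal_balanced N C2" "C1 \<noteq> C2"
    and "balancing_weights N C1 lam1" "balancing_weights N C2 lam2"
    and "incidence_rank N (C1 \<union> C2) = card (C1 \<union> C2) - 1" "J \<subseteq> C1 \<union> C2"
    and "(\<Sum>S\<in>J. if S \<in> C1 then lam1 S else 0) \<noteq> (\<Sum>S\<in>J. if S \<in> C2 then lam2 S else 0)"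
    and "0 < (1 - (\<Sum>S\<in>J. if S \<in> C1 then lam1 S else 0)) /
        ((\<Sum>S\<in>J. if S \<in> C2 then lam2 S else 0) - (\<Sum>S\<in>J. if S \<in> C1 then lam1 S else 0))"
    and "(1 - (\<Sum>S\<in>J. if S \<in> C1 then lam1 S else 0)) /
        ((\<Sum>S\<in>J. if S \<in> C2 then lam2 S else 0) - (\<Sum>S\<in>J. if S \<in> C1 then lam1 S else 0)) < 1"
  using assms unfolding crossing_pair_def Let_def by blast+

text \<open>Under augmented independence the balancing weights of \<open>C\<close> with \<open>J\<close>-weight 1 form
  an open segment in direction \<open>d\<close>; its endpoints are minimal balanced subcollections.\<close>
lemma balancing_segment_endpoint:
  assumes "finite N" "collection_on N C" "balancing_weights N C w" "J \<subseteq> C" "(\<Sum>S\<in>J. w S) = 1"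
    and aug: "indep_columns_augmented N C J"
    and d: "kernel_vector N C d" "(\<Sum>S\<in>J. d S) \<noteq> 0"
    and "S0 \<in> C" "d S0 < 0"
  obtains a where "a > 0" "\<forall>S\<in>C. w S + a * d S \<ge> 0"
    "\<exists>S\<in>C. d S < 0 \<and> w S + a * d S = 0"
    "minimal_balanced N {S\<in>C. w S + a * d S > 0}"
    "balancing_weights N {S\<in>C. w S + a * d S > 0} (\<lambda>S. w S + a * d S)"
    "(\<Sum>S\<in>J. if S \<in> {S\<in>C. w S + a * d S > 0} then w S + a * d S else 0)
       = 1 + a * (\<Sum>S\<in>J. d S)"
proof -
  have fin: "finite C" using finite_collection_on[OF assms(1,2)] .
  have w_pos: "\<forall>S\<in>C. w S > 0" using assms(3) unfolding balancing_weights_def by blast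
  obtain a S1 where a: "a > 0" "S1 \<in> C" "d S1 < 0" "w S1 + a * d S1 = 0"
    and nonneg: "\<forall>S\<in>C. w S + a * d S \<ge> 0"
    by (rule ratio_test[where d = d, OF fin w_pos assms(9,10)])
  have spanned: "\<forall>e. kernel_vector N C e \<longrightarrow> (\<exists>s. \<forall>S\<in>C. e S = s * d S)"
    using kernel_spanned_if_indep_columns_augmented[OF aug d] by blast
  have "(\<Sum>S\<in>J. if S \<in> {S\<in>C. w S + a * d S > 0} then w S + a * d S else 0)
      = (\<Sum>S\<in>J. w S + a * d S)"
    using assms(4) nonneg by (intro sum.cong) fastforce+
  also have "\<dots> = 1 + a * (\<Sum>S\<in>J. d S)"
    using assms(5) by (simp add: sum.distrib sum_distrib_left)
  finally show thesis
    using a by (intro that[OF a(1) nonneg _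
          minimal_balanced_at_boundary[OF assms(1-3) d(1) spanned nonneg a(2) a(4)]
          balancing_weights_shift[OF fin assms(3) d(1) nonneg]]) auto
qed

lemma kernel_generator_if_indep_columns_augmented:
  assumes "finite C" "collection_on N C" "indep_columns_augmented N C J" "\<not> indep_columns N C"
  obtains d where "kernel_vector N C d" "(\<Sum>S\<in>J. d S) \<noteq> 0"
    "\<forall>e. kernel_vector N C e \<longrightarrow> (\<exists>s. \<forall>S\<in>C. e S = s * d S)"
    "\<exists>S\<in>C. d S < 0" "\<exists>S\<in>C. d S > 0"
proof -
  obtain d S0 where d: "kernel_vector N C d" and S0: "S0 \<in> C" "d S0 \<noteq> 0"
    using assms(4) unfolding indep_columns_iff_kernel_vector by blast
  have dJ: "(\<Sum>S\<in>J. d S) \<noteq> 0"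
    using assms(3) d S0 unfolding indep_columns_augmented_def by blast
  show thesis
  proof (rule that[OF d dJ])
    show "\<forall>e. kernel_vector N C e \<longrightarrow> (\<exists>s. \<forall>S\<in>C. e S = s * d S)"
      using kernel_spanned_if_indep_columns_augmented[OF assms(3) d dJ] by blast
    show "\<exists>S\<in>C. d S < 0" using kernel_vector_has_negative[OF assms(1,2) d S0] by blast
    show "\<exists>S\<in>C. d S > 0" using kernel_vector_has_positive[OF assms(1,2) d S0] by blast
  qed
qed

lemma shifted_supports_cover:
  fixes w d :: "'b \<Rightarrow> real"
  assumes "\<forall>S\<in>C. w S > 0" "a > 0" "b > 0"
    and "\<forall>S\<in>C. w S + a * d S \<ge> 0" "\<forall>S\<in>C. w S + b * - d S \<ge> 0"
  shows "{S\<in>C. w S + a * d S > 0} \<union> {S\<in>C. w S + b * - d S > 0} = C"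
proof (rule ccontr)
  assume "{S\<in>C. w S + a * d S > 0} \<union> {S\<in>C. w S + b * - d S > 0} \<noteq> C"
  then obtain S where S: "S \<in> C" "\<not> w S + a * d S > 0" "\<not> w S + b * - d S > 0" by blast
  then have "w S + a * d S = 0" "w S - b * d S = 0"
    using assms(4)[rule_format, OF S(1)] assms(5)[rule_format, OF S(1)] by auto
  then have "(a + b) * d S = 0" by (simp add: algebra_simps)
  then have "d S = 0" using assms(2,3) by simp
  then show False using \<open>w S + a * d S = 0\<close> assms(1) S(1) by force
qed

lemma crossing_pair_of_dependent:
  assumes finN: "finite N" and coll: "collection_on N C" and w: "balancing_weights N C w"
    and J: "J \<subseteq> C" "(\<Sum>S\<in>J. w S) = 1"
    and aug: "indep_columns_augmented N C J" and dep: "\<not> indep_columns N C"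
  obtains C1 C2 lam1 lam2 where "crossing_pair N C1 C2 lam1 lam2 J" "C1 \<union> C2 = C"
proof -
  have fin: "finite C" using finite_collection_on[OF finN coll] .
  have w_pos: "\<forall>S\<in>C. w S > 0" using w unfolding balancing_weights_def by blast
  obtain d where d: "kernel_vector N C d" "(\<Sum>S\<in>J. d S) \<noteq> 0"
    and spanned: "\<forall>e. kernel_vector N C e \<longrightarrow> (\<exists>s. \<forall>S\<in>C. e S = s * d S)"
    and "\<exists>S\<in>C. d S < 0" "\<exists>S\<in>C. d S > 0"
    by (rule kernel_generator_if_indep_columns_augmented[OF fin coll aug dep])
  then obtain Sn Sp where Sn: "Sn \<in> C" "d Sn < 0" and Sp: "Sp \<in> C" "- d Sp < 0" by auto
  have d': "kernel_vector N C (\<lambda>S. - d S)" "(\<Sum>S\<in>J. - d S) \<noteq> 0"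
    using kernel_vector_uminus[OF d(1)] d(2) by (simp_all add: sum_negf)
  obtain a where a: "a > 0" "\<forall>S\<in>C. w S + a * d S \<ge> 0" "\<exists>S\<in>C. d S < 0 \<and> w S + a * d S = 0"
    and C1: "minimal_balanced N {S\<in>C. w S + a * d S > 0}"
      "balancing_weights N {S\<in>C. w S + a * d S > 0} (\<lambda>S. w S + a * d S)"
      "(\<Sum>S\<in>J. if S \<in> {S\<in>C. w S + a * d S > 0} then w S + a * d S else 0)
         = 1 + a * (\<Sum>S\<in>J. d S)"
    by (rule balancing_segment_endpoint[OF finN coll w J aug d Sn])
  obtain b where b: "b > 0" "\<forall>S\<in>C. w S + b * - d S \<ge> 0"
    and C2: "minimal_balanced N {S\<in>C. w S + b * - d S > 0}"
      "balancing_weights N {S\<in>C. w S + b * - d S > 0} (\<lambda>S. w S + b * - d S)"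
      "(\<Sum>S\<in>J. if S \<in> {S\<in>C. w S + b * - d S > 0} then w S + b * - d S else 0)
         = 1 + b * (\<Sum>S\<in>J. - d S)"
    by (rule balancing_segment_endpoint[OF finN coll w J aug d' Sp])
  let ?C1 = "{S\<in>C. w S + a * d S > 0}" and ?C2 = "{S\<in>C. w S + b * - d S > 0}"
  obtain S1 where S1: "S1 \<in> C" "d S1 < 0" "w S1 + a * d S1 = 0" using a(3) by blast
  have "b * - d S1 > 0" "w S1 > 0" using S1(1,2) w_pos b(1) by (simp_all add: mult_pos_neg)
  then have "w S1 + b * - d S1 > 0" by simp
  then have "S1 \<in> ?C2" "S1 \<notin> ?C1" using S1 by simp_all
  then have "?C1 \<noteq> ?C2" by blast
  moreover have union: "?C1 \<union> ?C2 = C" by (rule shifted_supports_cover[OF w_pos a(1) b(1) a(2) b(2)])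
  moreover have "incidence_rank N (?C1 \<union> ?C2) = card (?C1 \<union> ?C2) - 1"
    unfolding union using fin dep S1
    by (intro incidence_rank_eq_card_minus_one indep_columns_if_kernel_spanned[OF fin spanned]) auto
  ultimately have "crossing_pair N ?C1 ?C2 (\<lambda>S. w S + a * d S) (\<lambda>S. w S + b * - d S) J"
    using C1 C2 a(1) b(1) d(2) J(1)
    by (intro crossing_pairI[where a = a and b = b and dJ = "\<Sum>S\<in>J. d S"]) (auto simp: sum_negf)
  then show thesis using that union by blast
qed

lemma crossing_pair_rows:
  assumes "crossing_pair N C1 C2 lam1 lam2 J" "finite (C1 \<union> C2)" "i \<in> N"
  shows "(\<Sum>S\<in>C1 \<union> C2. (if S \<in> C1 then lam1 S else 0) * indicator S i) = 1"
    and "(\<Sum>S\<in>C1 \<union> C2. (if S \<in> C2 then lam2 S else 0) * indicator S i) = 1"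
  using crossing_pairD(4,5)[OF assms(1)] assms(3)
    sum_if_member[OF assms(2), of C1 lam1] sum_if_member[OF assms(2), of C2 lam2]
  unfolding balancing_weights_def by auto

lemma crossing_pair_interpolation:
  assumes cp: "crossing_pair N C1 C2 lam1 lam2 J" and fin: "finite (C1 \<union> C2)"
  obtains w where "balancing_weights N (C1 \<union> C2) w" "(\<Sum>S\<in>J. w S) = 1"
proof -
  define mu where "mu = (\<lambda>S. if S \<in> C1 then lam1 S else 0)"
  define nu where "nu = (\<lambda>S. if S \<in> C2 then lam2 S else 0)"
  define t where "t = (1 - sum mu J) / (sum nu J - sum mu J)"
  have t: "sum mu J \<noteq> sum nu J" "0 < t" "t < 1"
    using crossing_pairD(8-10)[OF cp] unfolding mu_def nu_def t_def by blast+
  define w where "w = (\<lambda>S. (1 - t) * mu S + t * nu S)"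
  have "mu S > 0 \<or> nu S > 0" "mu S \<ge> 0" "nu S \<ge> 0" if "S \<in> C1 \<union> C2" for S
    using crossing_pairD(4,5)[OF cp] that
    unfolding balancing_weights_def mu_def nu_def by (auto simp: less_imp_le)
  then have "w S > 0" if "S \<in> C1 \<union> C2" for S
  proof -
    have "0 \<le> (1 - t) * mu S" "0 \<le> t * nu S" using t that \<open>S \<in> C1 \<union> C2 \<Longrightarrow> 0 \<le> mu S\<close>
        \<open>S \<in> C1 \<union> C2 \<Longrightarrow> 0 \<le> nu S\<close> by simp_all
    moreover have "0 < (1 - t) * mu S \<or> 0 < t * nu S"
      using t that \<open>S \<in> C1 \<union> C2 \<Longrightarrow> 0 < mu S \<or> 0 < nu S\<close> by auto
    ultimately show ?thesis unfolding w_def by linarith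
  qed
  moreover have "(\<Sum>S\<in>C1 \<union> C2. w S * indicator S i) = 1" if "i \<in> N" for i
  proof -
    have "(\<Sum>S\<in>C1 \<union> C2. w S * indicator S i)
        = (1 - t) * (\<Sum>S\<in>C1 \<union> C2. mu S * indicator S i) + t * (\<Sum>S\<in>C1 \<union> C2. nu S * indicator S i)"
      unfolding w_def by (simp add: distrib_right sum.distrib sum_distrib_left mult.assoc)
    then show ?thesis using crossing_pair_rows[OF cp fin that] unfolding mu_def nu_def by simp
  qed
  moreover have "(\<Sum>S\<in>J. w S) = 1"
  proof -
    have "(\<Sum>S\<in>J. w S) = (1 - t) * sum mu J + t * sum nu J"
      unfolding w_def by (simp add: sum.distrib sum_distrib_left)
    also have "\<dots> = sum mu J + t * (sum nu J - sum mu J)" by (simp add: algebra_simps)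
    also have "\<dots> = 1" using t(1) by (simp add: t_def)
    finally show ?thesis .
  qed
  ultimately show thesis by (intro that[of w]) (simp_all add: balancing_weights_def)
qed

lemma crossing_pair_indep_columns_augmented:
  assumes cp: "crossing_pair N C1 C2 lam1 lam2 J" and fin: "finite (C1 \<union> C2)"
  shows "indep_columns_augmented N (C1 \<union> C2) J"
  unfolding indep_columns_augmented_def
proof (intro allI impI)
  fix e assume e: "kernel_vector N (C1 \<union> C2) e \<and> (\<Sum>S\<in>J. e S) = 0"
  define d where "d = (\<lambda>S. (if S \<in> C2 then lam2 S else 0) - (if S \<in> C1 then lam1 S else 0))"
  have d: "kernel_vector N (C1 \<union> C2) d"
    using crossing_pair_rows[OF cp fin]
    unfolding kernel_vector_def d_def by (simp add: left_diff_distrib sum_subtractf)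
  have J: "J \<subseteq> C1 \<union> C2" using crossing_pairD(7)[OF cp] .
  have dJ: "(\<Sum>S\<in>J. d S) \<noteq> 0"
    using crossing_pairD(8)[OF cp] unfolding d_def by (simp add: sum_subtractf)
  then obtain S where "S \<in> J" "d S \<noteq> 0" using sum.neutral[of J d] by blast
  then have "S \<in> C1 \<union> C2" "d S \<noteq> 0" using J by blast+
  moreover obtain S0 where S0: "S0 \<in> C1 \<union> C2" "indep_columns N (C1 \<union> C2 - {S0})"
    using fin crossing_pairD(3,6)[OF cp] incidence_rank_eq_card_minus_oneE by blast
  ultimately have "d S0 \<noteq> 0" using kernel_vector_vanishing_at[OF fin S0 d] by blast
  then have proportional: "\<forall>S\<in>C1 \<union> C2. e S = e S0 / d S0 * d S"
    using kernel_vector_proportional[OF fin S0 _ d] e by blast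
  then have "e S0 / d S0 * (\<Sum>S\<in>J. d S) = (\<Sum>S\<in>J. e S)"
    using J by (simp add: sum_distrib_left subset_iff)
  then have "e S0 / d S0 = 0" using e dJ by simp
  then show "\<forall>S\<in>C1 \<union> C2. e S = 0" using proportional by (metis mult_zero_left)
qed

section \<open>Adding a player\<close>

definition extend_member :: "'a \<Rightarrow> 'a set set \<Rightarrow> 'a set \<Rightarrow> 'a set" where
  "extend_member p J S = (if S \<in> J then insert p S else S)"

lemma extend_by_eq_image: "J \<subseteq> C \<Longrightarrow> extend_by p C J = extend_member p J ` C"
  unfolding extend_by_def extend_member_def by (auto simp: image_iff)

lemma sum_if_eq_times_indicator:
  "finite C \<Longrightarrow> Y \<in> insert {} C \<Longrightarrow>
     (\<Sum>S\<in>C. (if S = Y then a else 0) * indicator S i) = a * (indicator Y i :: real)"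
  by (auto simp: if_distrib[where f = "\<lambda>x. x * _"] cong: if_cong)

locale lifting =
  fixes N :: "'a set" and p :: 'a and C :: "'a set set" and J :: "'a set set"
  assumes finite_N: "finite N" and p_notin: "p \<notin> N" and collection: "collection_on N C"
    and J_subset: "J \<subseteq> C"
begin

abbreviation lift :: "'a set \<Rightarrow> 'a set" where
  "lift \<equiv> extend_member p J"

lemma finite_C: "finite C"
  using finite_collection_on[OF finite_N collection] .

lemma p_notin_member: "S \<in> C \<Longrightarrow> p \<notin> S"
  using collection p_notin unfolding collection_on_def by blast

lemma lift_minus [simp]: "S \<in> C \<Longrightarrow> lift S - {p} = S"
  using p_notin_member unfolding extend_member_def by auto

lemma inj_on_lift: "inj_on lift C"
  by (metis inj_onI lift_minus)

lemma collection_on_lift: "collection_on (insert p N) (lift ` C)"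
  using collection unfolding collection_on_def extend_member_def by auto

lemma indicator_lift: "S \<in> C \<Longrightarrow> indicator (lift S) i =
    (if i = p then if S \<in> J then 1 else 0 else indicator S i :: real)"
  using p_notin_member unfolding extend_member_def by (auto simp: indicator_def)

lemma sum_lift_row:
  fixes c :: "'a set \<Rightarrow> real"
  assumes "i \<in> N"
  shows "(\<Sum>T\<in>lift ` C. c T * indicator T i) = (\<Sum>S\<in>C. c (lift S) * indicator S i)"
  using assms p_notin by (auto simp: sum.reindex[OF inj_on_lift] indicator_lift intro!: sum.cong)

lemma sum_lift_row_p:
  fixes c :: "'a set \<Rightarrow> real"
  shows "(\<Sum>T\<in>lift ` C. c T * indicator T p) = (\<Sum>S\<in>J. c (lift S))"
proof -
  have "(\<Sum>T\<in>lift ` C. c T * indicator T p) = (\<Sum>S\<in>C. if S \<in> J then c (lift S) else 0)"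
    by (auto simp: sum.reindex[OF inj_on_lift] indicator_lift intro!: sum.cong)
  also have "\<dots> = (\<Sum>S\<in>J. c (lift S))"
    using J_subset finite_C by (simp add: sum.If_cases Int_absorb1)
  finally show ?thesis .
qed

lemma exists_balancing_weights_lift_iff:
  "(\<exists>w. balancing_weights (insert p N) (lift ` C) w) \<longleftrightarrow>
   (\<exists>lam. balancing_weights N C lam \<and> (\<Sum>S\<in>J. lam S) = 1)"
proof
  assume "\<exists>w. balancing_weights (insert p N) (lift ` C) w"
  then obtain w where "balancing_weights (insert p N) (lift ` C) w" ..
  then have "balancing_weights N C (\<lambda>S. w (lift S)) \<and> (\<Sum>S\<in>J. w (lift S)) = 1"
    unfolding balancing_weights_def by (simp add: sum_lift_row sum_lift_row_p)
  then show "\<exists>lam. balancing_weights N C lam \<and> (\<Sum>S\<in>J. lam S) = 1" by blast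
next
  assume "\<exists>lam. balancing_weights N C lam \<and> (\<Sum>S\<in>J. lam S) = 1"
  then obtain lam where lam: "balancing_weights N C lam" "(\<Sum>S\<in>J. lam S) = 1" by blast
  have "(\<Sum>S\<in>J. lam (lift S - {p})) = 1" using lam(2) J_subset
    by (metis (no_types, lifting) lift_minus subsetD sum.cong)
  then have "balancing_weights (insert p N) (lift ` C) (\<lambda>T. lam (T - {p}))"
    using lam(1) unfolding balancing_weights_def by (simp add: sum_lift_row sum_lift_row_p)
  then show "\<exists>w. balancing_weights (insert p N) (lift ` C) w" by blast
qed

lemma indep_columns_lift_iff:
  "indep_columns (insert p N) (lift ` C) \<longleftrightarrow> indep_columns_augmented N C J"
proof -
  have kernel: "kernel_vector (insert p N) (lift ` C) c \<longleftrightarrow>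
      kernel_vector N C (\<lambda>S. c (lift S)) \<and> (\<Sum>S\<in>J. c (lift S)) = 0" for c
    unfolding kernel_vector_def by (auto simp: sum_lift_row sum_lift_row_p)
  show ?thesis
    unfolding indep_columns_iff_kernel_vector indep_columns_augmented_def
  proof (intro iffI allI impI)
    fix e assume indep: "\<forall>c. kernel_vector (insert p N) (lift ` C) c \<longrightarrow> (\<forall>T\<in>lift ` C. c T = 0)"
      and e: "kernel_vector N C e \<and> (\<Sum>S\<in>J. e S) = 0"
    have "(\<Sum>S\<in>J. e (lift S - {p})) = 0" using e J_subset
      by (metis (no_types, lifting) lift_minus subsetD sum.cong)
    then have "kernel_vector (insert p N) (lift ` C) (\<lambda>T. e (T - {p}))"
      using e kernel_vector_cong[of C "\<lambda>S. e (lift S - {p})" e] unfolding kernel by simp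
    then show "\<forall>S\<in>C. e S = 0" using indep by fastforce
  next
    fix c assume "\<forall>e. kernel_vector N C e \<and> (\<Sum>S\<in>J. e S) = 0 \<longrightarrow> (\<forall>S\<in>C. e S = 0)"
      and "kernel_vector (insert p N) (lift ` C) c"
    then show "\<forall>T\<in>lift ` C. c T = 0" unfolding kernel by blast
  qed
qed

lemma minimal_balanced_lift_iff:
  "minimal_balanced (insert p N) (lift ` C) \<longleftrightarrow>
   (\<exists>lam. balancing_weights N C lam \<and> (\<Sum>S\<in>J. lam S) = 1) \<and> indep_columns_augmented N C J"
  using finite_N collection_on_lift
  by (simp add: minimal_balanced_iff_indep_columns balanced_iff_collection_on
      exists_balancing_weights_lift_iff indep_columns_lift_iff)

theorem minimal_balanced_extend_by_iff:
  "minimal_balanced (insert p N) (extend_by p C J) \<longleftrightarrow>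
    (\<exists>lam. minimal_balanced N C \<and> balancing_weights N C lam \<and> (\<Sum>S\<in>J. lam S) = 1) \<or>
    (\<exists>C1 C2 lam1 lam2. crossing_pair N C1 C2 lam1 lam2 J \<and> C1 \<union> C2 = C)"
  unfolding extend_by_eq_image[OF J_subset] minimal_balanced_lift_iff
proof (intro iffI; elim conjE disjE exE)
  fix lam assume lam: "balancing_weights N C lam" "(\<Sum>S\<in>J. lam S) = 1"
    and aug: "indep_columns_augmented N C J"
  show "(\<exists>lam. minimal_balanced N C \<and> balancing_weights N C lam \<and> (\<Sum>S\<in>J. lam S) = 1) \<or>
    (\<exists>C1 C2 lam1 lam2. crossing_pair N C1 C2 lam1 lam2 J \<and> C1 \<union> C2 = C)"
  proof (cases "indep_columns N C")
    case True
    then have "minimal_balanced N C"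
      using lam collection finite_N
      by (auto simp: minimal_balanced_iff_indep_columns balanced_iff_collection_on)
    then show ?thesis using lam by blast
  next
    case False
    obtain C1 C2 lam1 lam2 where "crossing_pair N C1 C2 lam1 lam2 J" "C1 \<union> C2 = C"
      by (rule crossing_pair_of_dependent[OF finite_N collection lam(1) J_subset lam(2) aug False])
    then show ?thesis by blast
  qed
next
  fix lam assume "minimal_balanced N C" "balancing_weights N C lam" "(\<Sum>S\<in>J. lam S) = 1"
  then show "(\<exists>lam. balancing_weights N C lam \<and> (\<Sum>S\<in>J. lam S) = 1) \<and> indep_columns_augmented N C J"
    using finite_N by (auto simp: minimal_balanced_iff_indep_columns intro: indep_columns_augmentedI)
next
  fix C1 C2 lam1 lam2 assume cp: "crossing_pair N C1 C2 lam1 lam2 J" and C: "C1 \<union> C2 = C"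
  obtain w where "balancing_weights N C w" "(\<Sum>S\<in>J. w S) = 1"
    using crossing_pair_interpolation[OF cp] finite_C C by blast
  moreover have "indep_columns_augmented N C J"
    using crossing_pair_indep_columns_augmented[OF cp] finite_C C by blast
  ultimately show "(\<exists>lam. balancing_weights N C lam \<and> (\<Sum>S\<in>J. lam S) = 1) \<and> indep_columns_augmented N C J"
    by blast
qed

text \<open>The additional set \<open>insert p Y\<close> of constructions (2) (\<open>Y = {}\<close>) and (3)
  (\<open>Y = \<delta>\<close>), called the apex below.\<close>
context
  fixes Y :: "'a set"
  assumes Y: "Y \<in> insert {} (C - J)"
begin

lemma p_notin_Y: "p \<notin> Y"
  using Y p_notin_member by blast

lemma Y_notin_J: "Y \<notin> J"
  using Y J_subset collection unfolding collection_on_def by blast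

lemma apex_notin_lift: "insert p Y \<notin> lift ` C"
proof
  assume "insert p Y \<in> lift ` C"
  then obtain S where S: "S \<in> C" "lift S = insert p Y" by blast
  then have "S \<in> J" using p_notin_member[OF S(1)] unfolding extend_member_def by (auto split: if_splits)
  moreover have "S = Y" using lift_minus[OF S(1)] S(2) p_notin_Y by simp
  ultimately show False using Y_notin_J by blast
qed

lemma sum_apex_row:
  fixes c :: "'a set \<Rightarrow> real"
  assumes "i \<in> N"
  shows "(\<Sum>T\<in>insert (insert p Y) (lift ` C). c T * indicator T i)
    = (\<Sum>S\<in>C. (c (lift S) + (if S = Y then c (insert p Y) else 0)) * indicator S i)"
proof -
  have "indicator (insert p Y) i = (indicator Y i :: real)"
    using assms p_notin by (auto simp: indicator_def)
  moreover have "(\<Sum>S\<in>C. (if S = Y then c (insert p Y) else 0) * indicator S i)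
      = c (insert p Y) * (indicator Y i :: real)"
    using Y finite_C by (intro sum_if_eq_times_indicator) auto
  ultimately show ?thesis
    using finite_C apex_notin_lift assms
    by (simp add: sum_lift_row distrib_right sum.distrib)
qed

lemma sum_apex_row_p:
  fixes c :: "'a set \<Rightarrow> real"
  shows "(\<Sum>T\<in>insert (insert p Y) (lift ` C). c T * indicator T p)
    = c (insert p Y) + (\<Sum>S\<in>J. c (lift S))"
  using finite_C apex_notin_lift by (simp add: sum_lift_row_p)

lemma balancing_weights_apexD:
  assumes w: "balancing_weights (insert p N) (insert (insert p Y) (lift ` C)) w"
  obtains lam where "balancing_weights N C lam" "(\<Sum>S\<in>J. lam S) < 1"
    "Y \<in> C \<Longrightarrow> 1 - lam Y < (\<Sum>S\<in>J. lam S)"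
proof -
  define lam where "lam S = w (lift S) + (if S = Y then w (insert p Y) else 0)" for S
  have pos: "\<forall>S\<in>C. w (lift S) > 0" "w (insert p Y) > 0"
    using w unfolding balancing_weights_def by auto
  have rows: "\<forall>i\<in>N. (\<Sum>S\<in>C. lam S * indicator S i) = 1"
    using w unfolding balancing_weights_def lam_def by (simp add: sum_apex_row)
  have row_p: "w (insert p Y) + (\<Sum>S\<in>J. w (lift S)) = 1"
    using w unfolding balancing_weights_def by (simp add: sum_apex_row_p)
  have lamJ: "(\<Sum>S\<in>J. lam S) = (\<Sum>S\<in>J. w (lift S))"
    unfolding lam_def using Y_notin_J by (intro sum.cong) auto
  have "balancing_weights N C lam"
    unfolding balancing_weights_def lam_def using pos rows[unfolded lam_def] by auto
  moreover have "(\<Sum>S\<in>J. lam S) < 1" using lamJ row_p pos(2) by simp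
  moreover have "1 - lam Y < (\<Sum>S\<in>J. lam S)" if "Y \<in> C"
    using lamJ row_p pos(1)[rule_format, OF that] that unfolding lam_def by simp
  ultimately show thesis using that by blast
qed

lemma balancing_weights_apexI:
  assumes lam: "balancing_weights N C lam" "(\<Sum>S\<in>J. lam S) < 1"
    "Y \<in> C \<Longrightarrow> 1 - lam Y < (\<Sum>S\<in>J. lam S)"
  obtains w where "balancing_weights (insert p N) (insert (insert p Y) (lift ` C)) w"
proof -
  define L where "L = (\<Sum>S\<in>J. lam S)"
  text \<open>The apex takes weight \<open>1 - L\<close> from the player \<open>p\<close>; if the apex is
    \<open>Y \<union> {p}\<close>, the set \<open>Y\<close> gives up the same amount.\<close>
  define w where "w T = (if T = insert p Y then 1 - L
      else lam (T - {p}) - (if T - {p} = Y then 1 - L else 0))" for T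
  have w_lift: "w (lift S) = lam S - (if S = Y then 1 - L else 0)" if "S \<in> C" for S
    using that apex_notin_lift unfolding w_def by (auto simp: image_iff)
  have w_apex: "w (insert p Y) = 1 - L" unfolding w_def by simp
  have "w (lift S) > 0" if "S \<in> C" for S
    using that lam(1,3) w_lift[OF that] unfolding balancing_weights_def L_def by auto
  moreover have "w (lift S) + (if S = Y then w (insert p Y) else 0) = lam S" if "S \<in> C" for S
    using w_lift[OF that] w_apex by simp
  moreover have "(\<Sum>S\<in>J. w (lift S)) = L"
    unfolding L_def using w_lift J_subset Y_notin_J by (intro sum.cong) auto
  ultimately have "balancing_weights (insert p N) (insert (insert p Y) (lift ` C)) w"
    using lam(1,2) w_apex unfolding balancing_weights_def L_def
    by (simp add: sum_apex_row sum_apex_row_p cong: sum.cong)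
  then show thesis by (rule that)
qed

lemma exists_balancing_weights_apex_iff:
  "(\<exists>w. balancing_weights (insert p N) (insert (insert p Y) (lift ` C)) w) \<longleftrightarrow>
   (\<exists>lam. balancing_weights N C lam \<and> (\<Sum>S\<in>J. lam S) < 1 \<and>
      (Y \<in> C \<longrightarrow> 1 - lam Y < (\<Sum>S\<in>J. lam S)))"
  by (blast elim: balancing_weights_apexD balancing_weights_apexI)

lemma kernel_vector_apex_iff:
  "kernel_vector (insert p N) (insert (insert p Y) (lift ` C)) c \<longleftrightarrow>
   kernel_vector N C (\<lambda>S. c (lift S) + (if S = Y then c (insert p Y) else 0)) \<and>
   c (insert p Y) + (\<Sum>S\<in>J. c (lift S)) = 0"
  unfolding kernel_vector_def by (auto simp: sum_apex_row sum_apex_row_p)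

lemma indep_columns_apex_iff:
  "indep_columns (insert p N) (insert (insert p Y) (lift ` C)) \<longleftrightarrow> indep_columns N C"
  unfolding indep_columns_iff_kernel_vector
proof (intro iffI allI impI)
  fix e assume indep: "\<forall>c. kernel_vector (insert p N) (insert (insert p Y) (lift ` C)) c \<longrightarrow>
      (\<forall>T\<in>insert (insert p Y) (lift ` C). c T = 0)"
    and e: "kernel_vector N C e"
  define \<sigma> where "\<sigma> = (\<Sum>S\<in>J. e S)"
  define c where "c T = (if T = insert p Y then - \<sigma>
      else e (T - {p}) + (if T - {p} = Y then \<sigma> else 0))" for T
  have c_lift: "c (lift S) = e S + (if S = Y then \<sigma> else 0)" if "S \<in> C" for S
    using that apex_notin_lift unfolding c_def by (auto simp: image_iff)
  have sum_J: "(\<Sum>S\<in>J. c (lift S)) = \<sigma>"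
    unfolding \<sigma>_def using c_lift J_subset Y_notin_J by (intro sum.cong) auto
  have c_apex: "c (insert p Y) = - \<sigma>" unfolding c_def by simp
  have "c (lift S) + (if S = Y then c (insert p Y) else 0) = e S" if "S \<in> C" for S
    using c_lift[OF that] c_apex by simp
  then have "kernel_vector N C (\<lambda>S. c (lift S) + (if S = Y then c (insert p Y) else 0))"
    using e kernel_vector_cong[of C "\<lambda>S. c (lift S) + (if S = Y then c (insert p Y) else 0)" e N]
    by simp
  then have "kernel_vector (insert p N) (insert (insert p Y) (lift ` C)) c"
    unfolding kernel_vector_apex_iff using sum_J c_apex by simp
  then have zero: "\<forall>T\<in>insert (insert p Y) (lift ` C). c T = 0" using indep by blast
  then have "\<sigma> = 0" using c_apex by simp
  then show "\<forall>S\<in>C. e S = 0" using zero c_lift by auto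
next
  fix c assume indep: "\<forall>e. kernel_vector N C e \<longrightarrow> (\<forall>S\<in>C. e S = 0)"
    and "kernel_vector (insert p N) (insert (insert p Y) (lift ` C)) c"
  then have "\<forall>S\<in>C. c (lift S) + (if S = Y then c (insert p Y) else 0) = 0"
    and row_p: "c (insert p Y) + (\<Sum>S\<in>J. c (lift S)) = 0"
    unfolding kernel_vector_apex_iff by blast+
  then have lift_zero: "c (lift S) = - (if S = Y then c (insert p Y) else 0)" if "S \<in> C" for S
    using that by (simp add: eq_neg_iff_add_eq_0)
  have "(\<Sum>S\<in>J. c (lift S)) = 0"
    using lift_zero J_subset Y_notin_J by (intro sum.neutral) auto
  then have "c (insert p Y) = 0" using row_p by simp
  then show "\<forall>T\<in>insert (insert p Y) (lift ` C). c T = 0" using lift_zero by auto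
qed

theorem minimal_balanced_extend_by_insert_iff:
  "minimal_balanced (insert p N) (extend_by p C J \<union> {insert p Y}) \<longleftrightarrow>
   (\<exists>lam. minimal_balanced N C \<and> balancing_weights N C lam \<and> (\<Sum>S\<in>J. lam S) < 1 \<and>
      (Y \<in> C \<longrightarrow> 1 - lam Y < (\<Sum>S\<in>J. lam S)))"
proof -
  have "collection_on (insert p N) (insert (insert p Y) (lift ` C))"
    using collection_on_lift Y collection unfolding collection_on_def by auto
  then have "minimal_balanced (insert p N) (insert (insert p Y) (lift ` C)) \<longleftrightarrow>
      (\<exists>lam. balancing_weights N C lam \<and> (\<Sum>S\<in>J. lam S) < 1 \<and>
        (Y \<in> C \<longrightarrow> 1 - lam Y < (\<Sum>S\<in>J. lam S))) \<and> indep_columns N C"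
    using finite_N
    by (simp add: minimal_balanced_iff_indep_columns balanced_iff_collection_on
        exists_balancing_weights_apex_iff indep_columns_apex_iff)
  then show ?thesis
    using finite_N collection extend_by_eq_image[OF J_subset]
    by (auto simp: minimal_balanced_iff_indep_columns balanced_iff_collection_on)
qed

end

end

lemma at_most_one_apex:
  fixes B :: "'a set set"
  assumes indep: "indep_columns M B" and fin: "finite B"
    and S: "S \<in> B" "p \<in> S" "S - {p} \<in> insert {} B"
    and T: "T \<in> B" "p \<in> T" "T - {p} \<in> insert {} B"
  shows "S = T"
proof (rule ccontr)
  assume ne: "S \<noteq> T"
  text \<open>The columns of \<open>S\<close> and \<open>S - {p}\<close> differ by the unit vector of \<open>p\<close>,
    and so do those of \<open>T\<close> and \<open>T - {p}\<close>.\<close>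
  define c where "c X = (if X = S then 1 else 0) - (if X = S - {p} then 1 else 0)
    - (if X = T then 1 else 0) + (if X = T - {p} then 1 else (0::real))" for X
  have "kernel_vector M B c"
    unfolding kernel_vector_def
  proof
    fix i
    have "(\<Sum>X\<in>B. c X * indicator X i) = indicator S i - indicator (S - {p}) i
        - indicator T i + (indicator (T - {p}) i :: real)"
      unfolding c_def using fin S T
      by (simp add: left_diff_distrib distrib_right sum.distrib sum_subtractf sum_if_eq_times_indicator)
    also have "\<dots> = 0" using S(2) T(2) by (auto simp: indicator_def)
    finally show "(\<Sum>X\<in>B. c X * indicator X i) = 0" .
  qed
  moreover have "c S = 1" unfolding c_def using S(2) T(2) ne by auto
  ultimately show False using indep S(1) unfolding indep_columns_iff_kernel_vector by force
qed

lemma extend_by_remove_point: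
  assumes coll: "collection_on (insert p N) B"
    and K_def: "K = {T\<in>B. p \<in> T \<and> T - {p} \<in> insert {} B}"
    and C_def: "C = (\<lambda>T. T - {p}) ` (B - K)" and J_def: "J = C - B"
  shows "collection_on N C" "J \<subseteq> C" "extend_by p C J = B - K"
    and "\<forall>T\<in>K. \<exists>Y\<in>insert {} (C - J). T = insert p Y"
proof -
  show "collection_on N C" using coll unfolding collection_on_def C_def K_def by blast
  show J_sub: "J \<subseteq> C" unfolding J_def by blast
  have "extend_member p J (T - {p}) = T" if "T \<in> B - K" for T
  proof (cases "p \<in> T")
    case True
    then have "T - {p} \<in> J" using that unfolding K_def J_def C_def by blast
    then show ?thesis using True unfolding extend_member_def by auto
  next
    case False
    then have "T - {p} \<notin> J" using that unfolding J_def by simp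
    then show ?thesis using False unfolding extend_member_def by simp
  qed
  then show "extend_by p C J = B - K"
    unfolding extend_by_eq_image[OF J_sub] unfolding C_def image_image by simp
  show "\<forall>T\<in>K. \<exists>Y\<in>insert {} (C - J). T = insert p Y"
  proof
    fix T assume "T \<in> K"
    then have T: "T \<in> B" "p \<in> T" "T - {p} \<in> insert {} B" unfolding K_def by blast+
    have "T - {p} \<in> insert {} (C - J)"
    proof (cases "T - {p} = {}")
      case False
      then have Y: "T - {p} \<in> B - K" using T unfolding K_def by blast
      then have "T - {p} \<in> C" unfolding C_def by (rule image_eqI[rotated]) simp
      then show ?thesis using Y unfolding J_def by blast
    qed simp
    then show "\<exists>Y\<in>insert {} (C - J). T = insert p Y" using T(2) by (intro bexI[of _ "T - {p}"]) auto
  qed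
qed

lemma extend_by_decomposition:
  assumes coll: "collection_on (insert p N) B" and fin: "finite B"
    and indep: "indep_columns (insert p N) B"
  obtains C J where "collection_on N C" "J \<subseteq> C"
    "B = extend_by p C J \<or> (\<exists>Y\<in>insert {} (C - J). B = extend_by p C J \<union> {insert p Y})"
proof -
  define K where "K = {T\<in>B. p \<in> T \<and> T - {p} \<in> insert {} B}"
  define C where "C = (\<lambda>T. T - {p}) ` (B - K)"
  define J where "J = C - B"
  note C = extend_by_remove_point[OF coll K_def C_def J_def]
  have unique: "T1 = T2" if "T1 \<in> K" "T2 \<in> K" for T1 T2
    using that at_most_one_apex[OF indep fin, where S = T1 and T = T2 and p = p]
    unfolding K_def by blast
  have "B = extend_by p C J \<or> (\<exists>Y\<in>insert {} (C - J). B = extend_by p C J \<union> {insert p Y})"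
  proof (cases "K = {}")
    case True
    then show ?thesis using C(3) by simp
  next
    case False
    then obtain T where T: "T \<in> K" by blast
    then have K: "K = {T}" using unique by blast
    obtain Y where "Y \<in> insert {} (C - J)" "T = insert p Y" using C(4) T by blast
    moreover have "B = (B - K) \<union> K" unfolding K_def by blast
    ultimately show ?thesis using C(3) K by auto
  qed
  then show thesis using that C(1,2) by blast
qed

definition plain_extension :: "'a set \<Rightarrow> 'a \<Rightarrow> 'a set set \<Rightarrow> bool" where
  "plain_extension N p B \<longleftrightarrow>
     (\<exists>C lam J. minimal_balanced N C \<and> balancing_weights N C lam \<and> J \<subseteq> C \<and>
        (\<Sum>S\<in>J. lam S) = 1 \<and> B = extend_by p C J)"

definition singleton_extension :: "'a set \<Rightarrow> 'a \<Rightarrow> 'a set set \<Rightarrow> bool" where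
  "singleton_extension N p B \<longleftrightarrow>
     (\<exists>C lam J. minimal_balanced N C \<and> balancing_weights N C lam \<and> J \<subseteq> C \<and>
        (\<Sum>S\<in>J. lam S) < 1 \<and> B = extend_by p C J \<union> {{p}})"

definition copy_extension :: "'a set \<Rightarrow> 'a \<Rightarrow> 'a set set \<Rightarrow> bool" where
  "copy_extension N p B \<longleftrightarrow>
     (\<exists>C lam J \<delta>. minimal_balanced N C \<and> balancing_weights N C lam \<and> J \<subseteq> C \<and>
        \<delta> \<in> C - J \<and> 1 > (\<Sum>S\<in>J. lam S) \<and> (\<Sum>S\<in>J. lam S) > 1 - lam \<delta> \<and>
        B = extend_by p C J \<union> {insert p \<delta>})"

definition pair_extension :: "'a set \<Rightarrow> 'a \<Rightarrow> 'a set set \<Rightarrow> bool" where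
  "pair_extension N p B \<longleftrightarrow>
     (\<exists>C1 C2 lam1 lam2 J. crossing_pair N C1 C2 lam1 lam2 J \<and> B = extend_by p (C1 \<union> C2) J)"

lemma minimal_balanced_insert_cases:
  assumes "finite N" "p \<notin> N" and min: "minimal_balanced (insert p N) B"
  shows "plain_extension N p B \<or> singleton_extension N p B \<or> copy_extension N p B \<or>
    pair_extension N p B"
proof -
  have coll: "collection_on (insert p N) B" and indep: "indep_columns (insert p N) B"
    using min assms(1) minimal_balanced_iff_indep_columns[of "insert p N"]
    by (auto simp: balanced_iff_collection_on)
  have "finite B" using finite_collection_on[OF _ coll] assms(1) by simp
  obtain C J where C: "collection_on N C" "J \<subseteq> C"
    and "B = extend_by p C J \<or> (\<exists>Y\<in>insert {} (C - J). B = extend_by p C J \<union> {insert p Y})"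
    by (rule extend_by_decomposition[OF coll \<open>finite B\<close> indep])
  then show ?thesis
  proof (elim disjE bexE)
    assume B: "B = extend_by p C J"
    interpret lifting N p C J using assms(1,2) C by unfold_locales
    show ?thesis
      using min minimal_balanced_extend_by_iff C(2)
      unfolding B plain_extension_def pair_extension_def by blast
  next
    fix Y assume Y: "Y \<in> insert {} (C - J)" and B: "B = extend_by p C J \<union> {insert p Y}"
    interpret lifting N p C J using assms(1,2) C by unfold_locales
    obtain lam where "minimal_balanced N C" "balancing_weights N C lam" "(\<Sum>S\<in>J. lam S) < 1"
      "Y \<in> C \<Longrightarrow> 1 - lam Y < (\<Sum>S\<in>J. lam S)"
      using min minimal_balanced_extend_by_insert_iff[OF Y] unfolding B by blast
    then show ?thesis
      using Y C(2) unfolding B singleton_extension_def copy_extension_def by blast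
  qed
qed

lemma minimal_balanced_insertI:
  assumes "finite N" "p \<notin> N"
    and "plain_extension N p B \<or> singleton_extension N p B \<or> copy_extension N p B \<or>
      pair_extension N p B"
  shows "minimal_balanced (insert p N) B"
proof -
  have lifting: "lifting N p C J" if "collection_on N C" "J \<subseteq> C" for C J
    using assms(1,2) that by unfold_locales
  have lifting_minimal: "lifting N p C J" if "minimal_balanced N C" "J \<subseteq> C" for C J
    using lifting minimal_balanced_collection_on that by blast
  from assms(3) show ?thesis
    unfolding plain_extension_def singleton_extension_def copy_extension_def pair_extension_def
  proof (elim disjE exE conjE)
    fix C lam J
    assume "minimal_balanced N C" "balancing_weights N C lam" "J \<subseteq> C" "(\<Sum>S\<in>J. lam S) = 1"
      and "B = extend_by p C J"
    then show ?thesis using lifting.minimal_balanced_extend_by_iff[OF lifting_minimal] by blast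
  next
    fix C lam J
    assume "minimal_balanced N C" "balancing_weights N C lam" "J \<subseteq> C" "(\<Sum>S\<in>J. lam S) < 1"
      and "B = extend_by p C J \<union> {{p}}"
    moreover from this have "{} \<notin> C"
      using minimal_balanced_collection_on unfolding collection_on_def by blast
    ultimately show ?thesis
      using lifting.minimal_balanced_extend_by_insert_iff[OF lifting_minimal, of C J "{}"] by blast
  next
    fix C lam J \<delta>
    assume "minimal_balanced N C" "balancing_weights N C lam" "J \<subseteq> C" "\<delta> \<in> C - J"
      "1 > (\<Sum>S\<in>J. lam S)" "(\<Sum>S\<in>J. lam S) > 1 - lam \<delta>"
      and "B = extend_by p C J \<union> {insert p \<delta>}"
    then show ?thesis
      using lifting.minimal_balanced_extend_by_insert_iff[OF lifting_minimal, of C J \<delta>] by blast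
  next
    fix C1 C2 lam1 lam2 J
    assume cp: "crossing_pair N C1 C2 lam1 lam2 J" and "B = extend_by p (C1 \<union> C2) J"
    moreover have "collection_on N (C1 \<union> C2)"
      using crossing_pairD(1,2)[OF cp] minimal_balanced_collection_on
      unfolding collection_on_def by blast
    ultimately show ?thesis
      using lifting.minimal_balanced_extend_by_iff[OF lifting, of "C1 \<union> C2" J]
        crossing_pairD(7)[OF cp] by blast
  qed
qed

theorem theorem4p5:
  fixes N :: "'a set" and p :: 'a and B :: "'a set set"
  assumes "finite N" and "N \<noteq> {}" and "p \<notin> N"
  shows "minimal_balanced (insert p N) B \<longleftrightarrow>
    ((\<exists>C lam J. minimal_balanced N C \<and> balancing_weights N C lam \<and> J \<subseteq> C \<and>
        (\<Sum>S\<in>J. lam S) = 1 \<and> B = extend_by p C J)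
   \<or> (\<exists>C lam J. minimal_balanced N C \<and> balancing_weights N C lam \<and> J \<subseteq> C \<and>
        (\<Sum>S\<in>J. lam S) < 1 \<and> B = extend_by p C J \<union> {{p}})
   \<or> (\<exists>C lam J \<delta>. minimal_balanced N C \<and> balancing_weights N C lam \<and> J \<subseteq> C \<and>
        \<delta> \<in> C - J \<and> 1 > (\<Sum>S\<in>J. lam S) \<and> (\<Sum>S\<in>J. lam S) > 1 - lam \<delta> \<and>
        B = extend_by p C J \<union> {insert p \<delta>})
   \<or> (\<exists>C1 C2 lam1 lam2 J.
        minimal_balanced N C1 \<and> minimal_balanced N C2 \<and> C1 \<noteq> C2 \<and>
        balancing_weights N C1 lam1 \<and> balancing_weights N C2 lam2 \<and>
        incidence_rank N (C1 \<union> C2) = card (C1 \<union> C2) - 1 \<and>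
        J \<subseteq> C1 \<union> C2 \<and>
        (let mu = (\<lambda>S. if S \<in> C1 then lam1 S else 0);
             nu = (\<lambda>S. if S \<in> C2 then lam2 S else 0);
             muJ = (\<Sum>S\<in>J. mu S); nuJ = (\<Sum>S\<in>J. nu S);
             t = (1 - muJ) / (nuJ - muJ)
         in muJ \<noteq> nuJ \<and> 0 < t \<and> t < 1) \<and>
        B = extend_by p (C1 \<union> C2) J))"
proof -
  have "minimal_balanced (insert p N) B \<longleftrightarrow> plain_extension N p B \<or> singleton_extension N p B \<or>
      copy_extension N p B \<or> pair_extension N p B"
    using minimal_balanced_insert_cases[OF assms(1,3)] minimal_balanced_insertI[OF assms(1,3)] by blast
  then show ?thesis
    unfolding plain_extension_def singleton_extension_def copy_extension_def pair_extension_def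
      crossing_pair_def conj_assoc .
qed

end
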